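(* Consider the online resource allocation model with samples described in the context, where $r_1,r_2$ are unknown to the decision-maker. Consider the algorithm that, with probability $1/2$, accepts only type 1 agents (each arriving type 1 agent is accepted while resource remains, all type 2 agents rejected), and with probability $1/2$ accepts only type 2 agents. For $p=O(1/\sqrt m)$ and any $m>0$, the competitive ratio of this algorithm is $1/2$.
   Context: Model: a decision-maker has $m$ units of a divisible resource to allocate to unit-demand agents of two types; an accepted type-$i$ agent ($i\in\{1,2\}$) yields a reward in $\{0,1\}$ with mean $r_i\in(0,1)$, $r_1>r_2$. An adversary chooses integers $h,\ell\ge0$. Each agent is independently sampled with probability $p$; $s_1\sim\mathrm{Bin}(h,p)$, $s_2\sim\mathrm{Bin}(\ell,p)$; $\psi$ is the sample information. The remaining $n_1=h-s_1$ type 1 and $n_2=\ell-s_2$ type 2 agents arrive online in an adversarial order $I$; on each arrival the decision-maker irrevocably accepts (possibly fractionally) or rejects, total allocation at most $m$. $\mathrm{OPT}(I)=r_1\min\{n_1,m\}+r_2\min\{n_2,(m-n_1)^+\}$. The competitive ratio of an algorithm $A$ is $\inf_{(h,\ell)}\mathbb E_\psi[\inf_I\mathbb E[\mathrm{REW}_A(I,\psi)]/\mathrm{OPT}(I)]$, $\mathrm{REW}_A$ being its cumulative expected reward and the inner expectation over its randomness. *)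

theory Defs
  imports "HOL-Probability.Probability"
begin

text \<open>Agent types are encoded as the natural numbers 1 and 2. An arrival order
  is a list of types.\<close>

definition type_reward :: "real \<Rightarrow> real \<Rightarrow> nat \<Rightarrow> real" where
  "type_reward r1 r2 t = (if t = 1 then r1 else r2)"

definition OPT :: "real \<Rightarrow> real \<Rightarrow> real \<Rightarrow> nat \<Rightarrow> nat \<Rightarrow> real" where
  "OPT m r1 r2 n1 n2 = r1 * min (real n1) m + r2 * min (real n2) (max (m - real n1) 0)"

definition orders :: "nat \<Rightarrow> nat \<Rightarrow> nat list set" where
  "orders n1 n2 = {I. set I \<subseteq> {1, 2} \<and> count_list I 1 = n1 \<and> count_list I 2 = n2}"

fun greedy_only :: "nat \<Rightarrow> real \<Rightarrow> real \<Rightarrow> real \<Rightarrow> nat list \<Rightarrow> real" where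
  "greedy_only i r1 r2 c [] = 0"
| "greedy_only i r1 r2 c (t # ts) =
     (if t = i then
        type_reward r1 r2 t * min 1 (max c 0) + greedy_only i r1 r2 (c - min 1 (max c 0)) ts
      else greedy_only i r1 r2 c ts)"

text \<open>The randomized algorithm of the theorem: with probability 1/2 accept only
  type 1, with probability 1/2 accept only type 2. Its expected reward does not
  use the sample information (s1, s2) nor r1, r2 for its decisions.\<close>
definition half_half_rew :: "real \<Rightarrow> real \<Rightarrow> real \<Rightarrow> nat \<Rightarrow> nat \<Rightarrow> nat list \<Rightarrow> real" where
  "half_half_rew m r1 r2 s1 s2 I = 1/2 * greedy_only 1 r1 r2 m I + 1/2 * greedy_only 2 r1 r2 m I"

text \<open>Ratio ALG/OPT, with the convention 0/0 = 1 (when OPT = 0 every algorithm is optimal).\<close>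
definition ratio :: "real \<Rightarrow> real \<Rightarrow> real" where
  "ratio a b = (if b = 0 then 1 else a / b)"

text \<open>Competitive ratio of an algorithm, given by its expected reward
  REW s1 s2 I as a function of the sample information (s1, s2) and the order I.\<close>
definition competitive_ratio ::
  "real \<Rightarrow> real \<Rightarrow> real \<Rightarrow> real \<Rightarrow> (nat \<Rightarrow> nat \<Rightarrow> nat list \<Rightarrow> real) \<Rightarrow> real" where
  "competitive_ratio m r1 r2 p REW =
     (INF hl \<in> (UNIV :: (nat \<times> nat) set).
        measure_pmf.expectation (pair_pmf (binomial_pmf (fst hl) p) (binomial_pmf (snd hl) p))
          (\<lambda>(s1, s2). INF I \<in> orders (fst hl - s1) (snd hl - s2).
              ratio (REW s1 s2 I) (OPT m r1 r2 (fst hl - s1) (snd hl - s2))))"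

end

theory Submission
  imports Defs
begin

text \<open>Whatever the arrival order, the branch accepting only type i serves
  min(n_i, m) agents of type i, so the algorithm earns
  (r1 min(n1, m) + r2 min(n2, m)) / 2, at least half of OPT: the ratio is
  at least 1/2 for every sample. Conversely, against k type-1 agents and no
  type-2 agent the ratio is exactly 1/2 unless all k agents are sampled, which
  happens with probability p^k; letting k grow shows the competitive ratio is
  at most 1/2.\<close>

lemma greedy_only_eq_min:
  assumes "c \<ge> 0"
  shows "greedy_only i r1 r2 c I = type_reward r1 r2 i * min (real (count_list I i)) c"
  using assms
proof (induction I arbitrary: c)
  case Nil
  then show ?case by simp
next
  case (Cons t ts)
  show ?case
  proof (cases "t = i")
    case True
    have "c - min 1 c \<ge> 0" by simp
    moreover have "min 1 c + min (real (count_list ts i)) (c - min 1 c)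
        = min (real (count_list ts i) + 1) c"
      by (auto simp: min_def)
    ultimately show ?thesis
      using True Cons by (simp add: distrib_left[symmetric] add.commute)
  next
    case False
    then show ?thesis using Cons by simp
  qed
qed

definition half_half_ratio :: "real \<Rightarrow> real \<Rightarrow> real \<Rightarrow> nat \<Rightarrow> nat \<Rightarrow> real" where
  "half_half_ratio m r1 r2 n1 n2 =
     ratio (1/2 * (r1 * min (real n1) m + r2 * min (real n2) m)) (OPT m r1 r2 n1 n2)"

lemma orders_nonempty: "replicate n1 1 @ replicate n2 2 \<in> orders n1 n2"
proof -
  have "count_list (replicate n x) x = n" for n and x :: nat
    by (induction n) auto
  then show ?thesis by (auto simp: orders_def)
qed

lemma INF_orders_half_half_rew:
  assumes "m \<ge> 0"
  shows "(INF I \<in> orders n1 n2. ratio (half_half_rew m r1 r2 s1 s2 I) (OPT m r1 r2 n1 n2))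
      = half_half_ratio m r1 r2 n1 n2"
proof -
  have "ratio (half_half_rew m r1 r2 s1 s2 I) (OPT m r1 r2 n1 n2) = half_half_ratio m r1 r2 n1 n2"
    if "I \<in> orders n1 n2" for I
    using that assms
    by (auto simp: orders_def half_half_rew_def half_half_ratio_def greedy_only_eq_min
        type_reward_def add_divide_distrib)
  then have "(INF I \<in> orders n1 n2. ratio (half_half_rew m r1 r2 s1 s2 I) (OPT m r1 r2 n1 n2))
      = (INF I \<in> orders n1 n2. half_half_ratio m r1 r2 n1 n2)"
    by (rule INF_cong[OF refl])
  also have "\<dots> = half_half_ratio m r1 r2 n1 n2"
    using orders_nonempty by (intro cINF_const) blast
  finally show ?thesis .
qed

lemma OPT_nonneg:
  assumes "m \<ge> 0" "r1 \<ge> 0" "r2 \<ge> 0"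
  shows "OPT m r1 r2 n1 n2 \<ge> 0"
  using assms by (simp add: OPT_def)

lemma OPT_le_sum_min:
  assumes "m \<ge> 0" "r2 \<ge> 0"
  shows "OPT m r1 r2 n1 n2 \<le> r1 * min (real n1) m + r2 * min (real n2) m"
proof -
  have "min (real n2) (max (m - real n1) 0) \<le> min (real n2) m" using assms by auto
  then show ?thesis using assms unfolding OPT_def by (simp add: mult_left_mono)
qed

lemma half_half_ratio_ge_half:
  assumes "m \<ge> 0" "0 \<le> r2" "r2 \<le> r1"
  shows "half_half_ratio m r1 r2 n1 n2 \<ge> 1/2"
proof (cases "OPT m r1 r2 n1 n2 = 0")
  case True
  then show ?thesis by (simp add: half_half_ratio_def ratio_def)
next
  case False
  moreover have "OPT m r1 r2 n1 n2 \<ge> 0" using assms by (intro OPT_nonneg) auto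
  ultimately have "OPT m r1 r2 n1 n2 > 0" by linarith
  with False OPT_le_sum_min[of m r2 r1 n1 n2] assms show ?thesis
    by (simp add: half_half_ratio_def ratio_def field_simps)
qed

lemma half_half_ratio_no_type2:
  assumes "m > 0" "0 < r1"
  shows "half_half_ratio m r1 r2 n 0 = (if n = 0 then 1 else 1/2)"
  using assms by (simp add: half_half_ratio_def ratio_def OPT_def min_def)

lemma expectation_half_half_ratio_ge_half:
  assumes "m \<ge> 0" "0 \<le> r2" "r2 \<le> r1" "0 \<le> p" "p \<le> 1"
  shows "measure_pmf.expectation (pair_pmf (binomial_pmf h p) (binomial_pmf l p))
           (\<lambda>(s1, s2). half_half_ratio m r1 r2 (h - s1) (l - s2)) \<ge> 1/2"
proof (rule measure_pmf.integral_ge_const)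
  have "finite (set_pmf (pair_pmf (binomial_pmf h p) (binomial_pmf l p)))"
    using assms by (auto simp: set_pair_pmf finite_set_pmf_binomial_pmf)
  then show "integrable (pair_pmf (binomial_pmf h p) (binomial_pmf l p))
      (\<lambda>(s1, s2). half_half_ratio m r1 r2 (h - s1) (l - s2))"
    by (rule integrable_measure_pmf_finite)
  show "AE x in pair_pmf (binomial_pmf h p) (binomial_pmf l p).
      1/2 \<le> (case x of (s1, s2) \<Rightarrow> half_half_ratio m r1 r2 (h - s1) (l - s2))"
    using half_half_ratio_ge_half[OF assms(1-3)] by (simp split: prod.split)
qed

lemma expectation_half_half_ratio_no_type2:
  assumes "m > 0" "0 < r1" "0 \<le> p" "p \<le> 1"
  shows "measure_pmf.expectation (pair_pmf (binomial_pmf k p) (binomial_pmf 0 p))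
           (\<lambda>(s1, s2). half_half_ratio m r1 r2 (k - s1) (0 - s2)) = 1/2 + p ^ k / 2"
proof -
  let ?B = "binomial_pmf k p"
  have "binomial_pmf 0 p = return_pmf 0" using assms by (simp add: binomial_pmf_0)
  then have "measure_pmf.expectation (pair_pmf ?B (binomial_pmf 0 p))
           (\<lambda>(s1, s2). half_half_ratio m r1 r2 (k - s1) (0 - s2))
      = measure_pmf.expectation ?B (\<lambda>s. half_half_ratio m r1 r2 (k - s) 0)"
    by (simp add: pair_return_pmf2)
  also have "\<dots> = measure_pmf.expectation ?B (\<lambda>s. 1/2 + 1/2 * indicator {k} s)"
  proof (rule integral_cong_AE)
    show "AE s in ?B. half_half_ratio m r1 r2 (k - s) 0 = 1/2 + 1/2 * indicator {k} s"
      using assms by (intro AE_pmfI) (auto simp: set_pmf_binomial_eq half_half_ratio_no_type2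
          split: if_splits)
  qed simp_all
  also have "\<dots> = 1/2 + 1/2 * pmf ?B k"
    using assms by (subst Bochner_Integration.integral_add) (auto simp: measure_pmf_single)
  also have "\<dots> = 1/2 + p ^ k / 2"
    using assms by simp
  finally show ?thesis .
qed

theorem theorem5:
  fixes m r1 r2 p C :: real
  assumes "m > 0"
    and "0 < r2" and "r2 < r1" and "r1 < 1"
    and "C > 0" and "0 \<le> p" and "p < 1" and "p \<le> C / sqrt m"
  shows "competitive_ratio m r1 r2 p (half_half_rew m r1 r2) = 1/2"
proof -
  define E where "E hl = measure_pmf.expectation
      (pair_pmf (binomial_pmf (fst hl) p) (binomial_pmf (snd hl) p))
      (\<lambda>(s1, s2). half_half_ratio m r1 r2 (fst hl - s1) (snd hl - s2))" for hl
  have CR: "competitive_ratio m r1 r2 p (half_half_rew m r1 r2) = (INF hl. E hl)"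
    using assms by (simp add: competitive_ratio_def E_def INF_orders_half_half_rew case_prod_beta)
  have E_ge: "E hl \<ge> 1/2" for hl
    unfolding E_def using assms by (intro expectation_half_half_ratio_ge_half) auto
  then have "bdd_below (range E)" by (intro bdd_belowI2)
  then have "(INF hl. E hl) \<le> 1/2 + p ^ k / 2" for k
    using cINF_lower[OF _ UNIV_I, of E "(k, 0)"]
      expectation_half_half_ratio_no_type2[of m r1 p k r2] assms
    by (simp add: E_def)
  moreover have "(\<lambda>k. 1/2 + p ^ k / 2) \<longlonglongrightarrow> 1/2"
    using assms by (auto intro!: tendsto_eq_intros LIMSEQ_realpow_zero)
  ultimately have "(INF hl. E hl) \<le> 1/2"
    by (intro LIMSEQ_le_const[where X = "\<lambda>k. 1/2 + p ^ k / 2"]) auto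
  moreover have "(INF hl. E hl) \<ge> 1/2"
    using E_ge by (intro cINF_greatest) auto
  ultimately show ?thesis using CR by simp
qed

end
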